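(* For any ultrafilter $x\in I$, there exists a sequence $\langle x_n:n\in\mathbb{N}\rangle$ of ultrafilters with $x_n\in\overline{L_n}$ for each $n$, such that $x_1\,\tilde{\mid}\,x_2\,\tilde{\mid}\,\cdots$ and $x_n\,\tilde{\mid}\,x$ for every $n$.
   Context: $\mathbb{N}=\{1,2,3,\dots\}$; $\beta\mathbb{N}$ is the set of ultrafilters on $\mathbb{N}$. For $A\subseteq\mathbb{N}$, $\overline{A}=\{x\in\beta\mathbb{N}:A\in x\}$. $P$ is the set of primes, $L_0=\{1\}$, $L_n=\{a_1\cdots a_n:a_i\in P\}$. $I=\bigcap_{i=0}^\infty\overline{\mathbb{N}\setminus L_i}$ (ultrafilters containing none of the $L_i$). For $x,y\in\beta\mathbb{N}$, $x\,\tilde{\mid}\,y$ iff for every $A\in x$ the set $\{k\in\mathbb{N}:\exists a\in A,\ a\mid k\}$ belongs to $y$. *)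

theory Defs
  imports "HOL-Computational_Algebra.Primes"
begin

definition Npos :: "nat set" where
  "Npos = {n. n \<ge> 1}"

text \<open>Ultrafilters on N (points of beta N), represented as sets of subsets of Npos.\<close>
definition ultrafilter_N :: "nat set set \<Rightarrow> bool" where
  "ultrafilter_N x \<longleftrightarrow>
     (\<forall>A\<in>x. A \<subseteq> Npos) \<and> Npos \<in> x \<and> {} \<notin> x \<and>
     (\<forall>A B. A \<in> x \<and> B \<in> x \<longrightarrow> A \<inter> B \<in> x) \<and>
     (\<forall>A B. A \<in> x \<and> A \<subseteq> B \<and> B \<subseteq> Npos \<longrightarrow> B \<in> x) \<and>
     (\<forall>A. A \<subseteq> Npos \<longrightarrow> A \<in> x \<or> Npos - A \<in> x)"

definition L :: "nat \<Rightarrow> nat set" where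
  "L n = {k. \<exists>ps. length ps = n \<and> (\<forall>p\<in>set ps. prime p) \<and> k = prod_list ps}"

text \<open>The set I: ultrafilters containing none of the L i, i.e. lying in every closure of N - L i.\<close>
definition I_set :: "nat set set set" where
  "I_set = {x. ultrafilter_N x \<and> (\<forall>i. Npos - L i \<in> x)}"

definition tdvd :: "nat set set \<Rightarrow> nat set set \<Rightarrow> bool" where
  "tdvd x y \<longleftrightarrow> (\<forall>A\<in>x. {k \<in> Npos. \<exists>a\<in>A. a dvd k} \<in> y)"

end

theory Submission
  imports Defs
begin

text \<open>Let \<open>f\<^sub>n k\<close> be the product of the \<open>n\<close> smallest prime factors of \<open>k\<close>, counted with
  multiplicity. Since \<open>x \<in> I\<close>, the set of \<open>k\<close> with at least \<open>n\<close> prime factors belongs to \<open>x\<close>,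
  and on it \<open>f\<^sub>n k \<in> L\<^sub>n\<close>, \<open>f\<^sub>n k\<close> divides \<open>f\<^sub>n\<^sub>+\<^sub>1 k\<close>, and \<open>f\<^sub>n k\<close> divides \<open>k\<close>. So the image
  ultrafilters \<open>x\<^sub>n = f\<^sub>n(x)\<close> contain \<open>L\<^sub>n\<close>, and divisibility of the maps on a set in \<open>x\<close>
  becomes tilde-divisibility \<open>x\<^sub>n \<sim>| x\<^sub>n\<^sub>+\<^sub>1\<close> and \<open>x\<^sub>n \<sim>| x\<close> (the latter with \<open>x = id(x)\<close>).\<close>

lemma ultrafilter_N_subset: "ultrafilter_N x \<Longrightarrow> A \<in> x \<Longrightarrow> A \<subseteq> Npos"
  unfolding ultrafilter_N_def by (elim conjE) (erule bspec)

lemma ultrafilter_N_Npos: "ultrafilter_N x \<Longrightarrow> Npos \<in> x"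
  unfolding ultrafilter_N_def by (elim conjE)

lemma ultrafilter_N_empty: "ultrafilter_N x \<Longrightarrow> {} \<notin> x"
  unfolding ultrafilter_N_def by (elim conjE)

lemma ultrafilter_N_Int:
  assumes "ultrafilter_N x" and "A \<in> x" and "B \<in> x"
  shows "A \<inter> B \<in> x"
proof -
  have "\<forall>A B. A \<in> x \<and> B \<in> x \<longrightarrow> A \<inter> B \<in> x"
    using assms(1) unfolding ultrafilter_N_def by (elim conjE)
  then show ?thesis using assms(2,3) by blast
qed

lemma ultrafilter_N_mono:
  assumes "ultrafilter_N x" and "A \<in> x" and "A \<subseteq> B" and "B \<subseteq> Npos"
  shows "B \<in> x"
proof -
  have "\<forall>A B. A \<in> x \<and> A \<subseteq> B \<and> B \<subseteq> Npos \<longrightarrow> B \<in> x"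
    using assms(1) unfolding ultrafilter_N_def by (elim conjE)
  then show ?thesis using assms(2-4) by blast
qed

lemma ultrafilter_N_compl:
  assumes "ultrafilter_N x" and "A \<subseteq> Npos"
  shows "A \<in> x \<or> Npos - A \<in> x"
proof -
  have "\<forall>A. A \<subseteq> Npos \<longrightarrow> A \<in> x \<or> Npos - A \<in> x"
    using assms(1) unfolding ultrafilter_N_def by (elim conjE)
  then show ?thesis using assms(2) by blast
qed

lemma ultrafilter_N_INT_lessThan:
  fixes n :: nat
  assumes x: "ultrafilter_N x" and B: "\<And>i. i < n \<Longrightarrow> B i \<in> x"
  shows "Npos \<inter> (\<Inter>i<n. B i) \<in> x"
  using B
proof (induction n)
  case 0
  then show ?case using ultrafilter_N_Npos[OF x] by simp
next
  case (Suc n)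
  have "Npos \<inter> (\<Inter>i<n. B i) \<in> x" "B n \<in> x" using Suc by simp_all
  then have "(Npos \<inter> (\<Inter>i<n. B i)) \<inter> B n \<in> x" by (rule ultrafilter_N_Int[OF x])
  moreover have "Npos \<inter> (\<Inter>i<Suc n. B i) = (Npos \<inter> (\<Inter>i<n. B i)) \<inter> B n"
    by (auto simp: lessThan_Suc)
  ultimately show ?case by simp
qed

definition uf_image :: "(nat \<Rightarrow> nat) \<Rightarrow> nat set set \<Rightarrow> nat set set" where
  "uf_image f x = {A. A \<subseteq> Npos \<and> {k \<in> Npos. f k \<in> A} \<in> x}"

lemma mem_uf_image_iff: "A \<in> uf_image f x \<longleftrightarrow> A \<subseteq> Npos \<and> {k \<in> Npos. f k \<in> A} \<in> x"
  by (simp add: uf_image_def)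

lemma ultrafilter_N_uf_image:
  assumes x: "ultrafilter_N x" and f: "f ` Npos \<subseteq> Npos"
  shows "ultrafilter_N (uf_image f x)"
  unfolding ultrafilter_N_def
proof (intro conjI allI impI ballI)
  let ?P = "\<lambda>A. {k \<in> Npos. f k \<in> A}"
  show "A \<subseteq> Npos" if "A \<in> uf_image f x" for A
    using that by (simp add: mem_uf_image_iff)
  have "?P Npos = Npos" using f by auto
  then show "Npos \<in> uf_image f x"
    using ultrafilter_N_Npos[OF x] by (simp add: mem_uf_image_iff)
  show "{} \<notin> uf_image f x"
    using ultrafilter_N_empty[OF x] by (simp add: mem_uf_image_iff)
  show "A \<inter> B \<in> uf_image f x" if "A \<in> uf_image f x \<and> B \<in> uf_image f x" for A B
  proof -
    have "?P A \<inter> ?P B \<in> x" "A \<inter> B \<subseteq> Npos"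
      using that ultrafilter_N_Int[OF x] by (auto simp: mem_uf_image_iff)
    moreover have "?P (A \<inter> B) = ?P A \<inter> ?P B" by blast
    ultimately show ?thesis by (simp add: mem_uf_image_iff)
  qed
  show "B \<in> uf_image f x" if "A \<in> uf_image f x \<and> A \<subseteq> B \<and> B \<subseteq> Npos" for A B
  proof -
    have "?P A \<in> x" using that by (simp add: mem_uf_image_iff)
    moreover have "?P A \<subseteq> ?P B" "?P B \<subseteq> Npos" using that by blast+
    ultimately have "?P B \<in> x" by (rule ultrafilter_N_mono[OF x])
    then show ?thesis using that by (simp add: mem_uf_image_iff)
  qed
  show "A \<in> uf_image f x \<or> Npos - A \<in> uf_image f x" if "A \<subseteq> Npos" for A
  proof -
    have "?P A \<in> x \<or> Npos - ?P A \<in> x"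
      by (rule ultrafilter_N_compl[OF x]) blast
    moreover have "?P (Npos - A) = Npos - ?P A" using f by blast
    ultimately show ?thesis using that by (simp add: mem_uf_image_iff)
  qed
qed

lemma uf_image_id:
  assumes x: "ultrafilter_N x"
  shows "uf_image id x = x"
proof (intro set_eqI)
  fix A
  have "A \<in> x \<Longrightarrow> A \<subseteq> Npos" by (rule ultrafilter_N_subset[OF x])
  moreover have "A \<subseteq> Npos \<Longrightarrow> {k \<in> Npos. id k \<in> A} = A" by auto
  ultimately show "A \<in> uf_image id x \<longleftrightarrow> A \<in> x"
    unfolding mem_uf_image_iff by auto
qed

lemma uf_image_mem:
  assumes x: "ultrafilter_N x" and "f ` Npos \<subseteq> A" and "A \<subseteq> Npos"
  shows "A \<in> uf_image f x"
proof -
  have "{k \<in> Npos. f k \<in> A} = Npos" using assms(2) by blast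
  then show ?thesis using assms(3) ultrafilter_N_Npos[OF x] by (simp add: mem_uf_image_iff)
qed

lemma tdvd_uf_image:
  assumes x: "ultrafilter_N x" and g: "g ` Npos \<subseteq> Npos"
    and dvd: "{k \<in> Npos. f k dvd g k} \<in> x"
  shows "tdvd (uf_image f x) (uf_image g x)"
  unfolding tdvd_def
proof
  fix A assume "A \<in> uf_image f x"
  then have "{k \<in> Npos. f k \<in> A} \<in> x" by (simp add: mem_uf_image_iff)
  then have "{k \<in> Npos. f k \<in> A} \<inter> {k \<in> Npos. f k dvd g k} \<in> x"
    using dvd by (rule ultrafilter_N_Int[OF x])
  moreover have "{k \<in> Npos. f k \<in> A} \<inter> {k \<in> Npos. f k dvd g k}
      \<subseteq> {k \<in> Npos. g k \<in> {m \<in> Npos. \<exists>a\<in>A. a dvd m}}"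
    using g by blast
  ultimately have "{k \<in> Npos. g k \<in> {m \<in> Npos. \<exists>a\<in>A. a dvd m}} \<in> x"
    by (rule ultrafilter_N_mono[OF x]) blast
  then show "{m \<in> Npos. \<exists>a\<in>A. a dvd m} \<in> uf_image g x"
    by (simp add: mem_uf_image_iff)
qed

definition prime_list :: "nat \<Rightarrow> nat list" where
  "prime_list k = sorted_list_of_multiset (prime_factorization k)"

lemma prime_list_prime: "p \<in> set (prime_list k) \<Longrightarrow> prime p"
  unfolding prime_list_def by (auto intro: in_prime_factors_imp_prime)

lemma prod_list_prime_list: "k > 0 \<Longrightarrow> prod_list (prime_list k) = k"
  unfolding prime_list_def
  by (metis prod_mset_prod_list mset_sorted_list_of_multiset prod_mset_prime_factorization_nat)

lemma mem_L_iff: "k \<in> L n \<longleftrightarrow> k > 0 \<and> length (prime_list k) = n"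
proof
  assume "k \<in> L n"
  then obtain ps where ps: "length ps = n" "\<forall>p\<in>set ps. prime p" "k = prod_list ps"
    unfolding L_def by auto
  have "0 \<notin> set ps" using ps(2) by auto
  then have "k > 0" using ps(3) by (metis prod_list_zero_iff gr0I)
  have "prime_factorization (prod_mset (mset ps)) = mset ps"
    by (rule prime_factorization_prod_mset_primes) (use ps(2) in auto)
  then have "prime_factorization k = mset ps"
    using ps(3) by (simp add: prod_mset_prod_list)
  then have "length (prime_list k) = n"
    using ps(1) by (metis prime_list_def size_mset mset_sorted_list_of_multiset)
  with \<open>k > 0\<close> show "k > 0 \<and> length (prime_list k) = n" ..
next
  assume "k > 0 \<and> length (prime_list k) = n"
  then show "k \<in> L n"
    unfolding L_def using prime_list_prime prod_list_prime_list by auto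
qed

lemma L_subset_Npos: "L n \<subseteq> Npos"
  by (auto simp: mem_L_iff Npos_def)

text \<open>The value \<open>2 ^ n\<close> for numbers with fewer than \<open>n\<close> prime factors is arbitrary; it only
  keeps the map inside \<open>L n\<close>.\<close>
definition initial_factor :: "nat \<Rightarrow> nat \<Rightarrow> nat" where
  "initial_factor n k =
     (if n \<le> length (prime_list k) then prod_list (take n (prime_list k)) else 2 ^ n)"

lemma initial_factor_in_L: "initial_factor n k \<in> L n"
proof (cases "n \<le> length (prime_list k)")
  case True
  then show ?thesis unfolding initial_factor_def L_def
    by (auto intro!: exI[of _ "take n (prime_list k)"] dest: in_set_takeD prime_list_prime)
next
  case False
  then show ?thesis unfolding initial_factor_def L_def
    by (auto intro!: exI[of _ "replicate n 2"] simp: prod_list_replicate)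
qed

lemma initial_factor_dvd:
  assumes "k > 0" and "n \<le> length (prime_list k)"
  shows "initial_factor n k dvd k"
proof -
  have "k = prod_list (take n (prime_list k)) * prod_list (drop n (prime_list k))"
    using prod_list_prime_list[OF assms(1)] by (metis append_take_drop_id prod_list.append)
  then show ?thesis using assms(2) unfolding initial_factor_def by (metis dvd_triv_left)
qed

lemma initial_factor_dvd_Suc:
  assumes "Suc n \<le> length (prime_list k)"
  shows "initial_factor n k dvd initial_factor (Suc n) k"
proof -
  have "take (Suc n) (prime_list k) = take n (prime_list k) @ [prime_list k ! n]"
    using assms by (simp add: take_Suc_conv_app_nth)
  then show ?thesis using assms unfolding initial_factor_def by simp
qed

lemma I_set_length_prime_list_ge:
  assumes "x \<in> I_set"
  shows "{k \<in> Npos. n \<le> length (prime_list k)} \<in> x"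
proof -
  have x: "ultrafilter_N x" and "\<And>i. Npos - L i \<in> x"
    using assms by (auto simp: I_set_def)
  then have "Npos \<inter> (\<Inter>i<n. Npos - L i) \<in> x"
    by (rule ultrafilter_N_INT_lessThan)
  moreover have "Npos \<inter> (\<Inter>i<n. Npos - L i) \<subseteq> {k \<in> Npos. n \<le> length (prime_list k)}"
    by (auto simp: mem_L_iff Npos_def not_le)
  ultimately show ?thesis by (rule ultrafilter_N_mono[OF x]) blast
qed

theorem corollary3p6:
  assumes "x \<in> I_set"
  shows "\<exists>xs :: nat \<Rightarrow> nat set set.
           (\<forall>n\<ge>1. ultrafilter_N (xs n) \<and> L n \<in> xs n) \<and>
           (\<forall>n\<ge>1. tdvd (xs n) (xs (Suc n))) \<and>
           (\<forall>n\<ge>1. tdvd (xs n) x)"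
proof -
  have x: "ultrafilter_N x" using assms by (simp add: I_set_def)
  have maps: "initial_factor n ` Npos \<subseteq> Npos" for n
    using initial_factor_in_L L_subset_Npos by blast
  let ?xs = "\<lambda>n. uf_image (initial_factor n) x"
  have "ultrafilter_N (?xs n)" for n
    by (rule ultrafilter_N_uf_image[OF x maps])
  moreover have "L n \<in> ?xs n" for n
    using initial_factor_in_L L_subset_Npos by (intro uf_image_mem[OF x]) auto
  moreover have "tdvd (?xs n) (?xs (Suc n))" for n
    using I_set_length_prime_list_ge[OF assms, of "Suc n"]
    by (intro tdvd_uf_image[OF x maps], elim ultrafilter_N_mono[OF x])
      (auto intro: initial_factor_dvd_Suc)
  moreover have "tdvd (?xs n) x" for n
  proof -
    have "tdvd (?xs n) (uf_image id x)"
      using I_set_length_prime_list_ge[OF assms, of n]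
      by (intro tdvd_uf_image[OF x], simp, elim ultrafilter_N_mono[OF x])
        (auto intro: initial_factor_dvd simp: Npos_def)
    then show ?thesis by (simp add: uf_image_id[OF x])
  qed
  ultimately show ?thesis by (intro exI[of _ ?xs]) blast
qed

end
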